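(* Let $\kappa$ be an uncountable regular cardinal and let $\mathcal{I}$ be a $\kappa$-complete proper ideal on $\kappa$ containing every bounded subset of $\kappa$ and having a basis of size $\kappa$. Let $\langle B_\alpha:\alpha<\kappa\rangle$ be an approximation sequence of $\mathcal{I}$, and let $A\subseteq\kappa$ be unbounded. If $f\colon{}^{\kappa}\kappa\to{}^{\kappa}\kappa$ is $A$-recursive over $\langle B_\alpha:\alpha<\kappa\rangle$, then $f$ is continuous with respect to $\tau_{\mathcal{I}}$ on both sides.
   Context: A basis for $\mathcal{I}$ is a family $\mathcal{B}\subseteq\mathcal{I}$ such that every member of $\mathcal{I}$ is contained in a member of $\mathcal{B}$. An approximation sequence of $\mathcal{I}$ is a sequence $\langle B_\alpha:\alpha<\kappa\rangle$ of members of $\mathcal{I}$ with $B_0=\emptyset$, $B_\alpha\subsetneq B_\beta$ for $\alpha<\beta$, $B_\alpha=\bigcup_{\beta<\alpha}B_\beta$ for limit $\alpha$, and such that every $B\in\mathcal{I}$ satisfies $B\subsetneq B_\alpha$ for some $\alpha$. $\mathrm{Fn}_{\mathcal{I}}$ is the set of functions $D\to\kappa$ with $D\in\mathcal{I}$; $\tau_{\mathcal{I}}$ on ${}^{\kappa}\kappa$ is generated by the sets $\mathbf{N}_g=\{x:g\subseteq x\}$, $g\in\mathrm{Fn}_{\mathcal{I}}$. $H\colon\mathrm{Fn}_{\mathcal{I}}\to\mathrm{Fn}_{\mathcal{I}}$ is monotone if $g\subseteq h$ implies $H(g)\subseteq H(h)$. $f$ is $A$-recursive over $\langle B_\alpha\rangle$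 if there is a monotone $H\colon\mathrm{Fn}_{\mathcal{I}}\to\mathrm{Fn}_{\mathcal{I}}$ such that for every $\alpha\in A$ and every $x\in{}^{\kappa}\kappa$, $f(x)(\theta)=H(x\restriction B_\alpha)(\theta)$ for all $\theta\in B_{\alpha'}\cup(A\cap\alpha')$, where $\alpha'=\min(A\setminus(\alpha+1))$. *)

theory Defs
  imports "HOL-Analysis.Analysis" "HOL-Library.Equipollence"
begin

text \<open>The cardinal kappa is represented by a well-ordered type 'k whose elements are
  the ordinals below kappa; "alpha < kappa" is just "alpha :: 'k".\<close>

definition is_initial_wo :: "'k::wellorder itself \<Rightarrow> bool" where
  "is_initial_wo _ \<longleftrightarrow> (\<forall>a::'k. \<not> (UNIV::'k set) \<lesssim> {..<a})"

definition uncountable_regular_cardinal :: "'k::wellorder itself \<Rightarrow> bool" where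
  "uncountable_regular_cardinal K \<longleftrightarrow>
     is_initial_wo K \<and> uncountable (UNIV::'k set) \<and>
     (\<forall>X::'k set. \<not> (UNIV::'k set) \<lesssim> X \<longrightarrow> (\<exists>b. \<forall>x\<in>X. x < b))"

definition bounded_set :: "'k::wellorder set \<Rightarrow> bool" where
  "bounded_set X \<longleftrightarrow> (\<exists>b. \<forall>x\<in>X. x < b)"

definition unbounded_set :: "'k::wellorder set \<Rightarrow> bool" where
  "unbounded_set A \<longleftrightarrow> (\<forall>b. \<exists>a\<in>A. b \<le> a)"

definition is_ideal :: "'k set set \<Rightarrow> bool" where
  "is_ideal I \<longleftrightarrow> {} \<in> I \<and> (\<forall>X\<in>I. \<forall>Y. Y \<subseteq> X \<longrightarrow> Y \<in> I) \<and>
     (\<forall>X\<in>I. \<forall>Y\<in>I. X \<union> Y \<in> I)"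

definition kappa_complete :: "'k set set \<Rightarrow> bool" where
  "kappa_complete I \<longleftrightarrow> (\<forall>F. F \<subseteq> I \<and> \<not> (UNIV::'k set) \<lesssim> F \<longrightarrow> \<Union>F \<in> I)"

definition proper_ideal :: "'k set set \<Rightarrow> bool" where
  "proper_ideal I \<longleftrightarrow> (UNIV::'k set) \<notin> I"

definition is_basis :: "'k set set \<Rightarrow> 'k set set \<Rightarrow> bool" where
  "is_basis I \<B> \<longleftrightarrow> \<B> \<subseteq> I \<and> (\<forall>X\<in>I. \<exists>Y\<in>\<B>. X \<subseteq> Y)"

definition is_limit :: "'k::wellorder \<Rightarrow> bool" where
  "is_limit a \<longleftrightarrow> (\<exists>b. b < a) \<and> (\<forall>b<a. \<exists>c. b < c \<and> c < a)"

definition approximation_seq :: "'k::wellorder set set \<Rightarrow> ('k \<Rightarrow> 'k set) \<Rightarrow> bool" where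
  "approximation_seq I B \<longleftrightarrow>
     B (LEAST a. True) = {} \<and>
     (\<forall>a. B a \<in> I) \<and>
     (\<forall>a b. a < b \<longrightarrow> B a \<subset> B b) \<and>
     (\<forall>a. is_limit a \<longrightarrow> B a = (\<Union>b\<in>{..<a}. B b)) \<and>
     (\<forall>X\<in>I. \<exists>a. X \<subset> B a)"

definition Fn :: "'k set set \<Rightarrow> ('k \<rightharpoonup> 'k) set" where
  "Fn I = {g. dom g \<in> I}"

definition ext_by :: "('k \<rightharpoonup> 'k) \<Rightarrow> ('k \<Rightarrow> 'k) \<Rightarrow> bool" where
  "ext_by g x \<longleftrightarrow> (\<forall>t\<in>dom g. g t = Some (x t))"

definition Nbhd :: "('k \<rightharpoonup> 'k) \<Rightarrow> ('k \<Rightarrow> 'k) set" where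
  "Nbhd g = {x. ext_by g x}"

definition tau :: "'k set set \<Rightarrow> ('k \<Rightarrow> 'k) topology" where
  "tau I = topology_generated_by (Nbhd ` Fn I)"

definition restr :: "('k \<Rightarrow> 'k) \<Rightarrow> 'k set \<Rightarrow> ('k \<rightharpoonup> 'k)" where
  "restr x D = (Some \<circ> x) |` D"

definition monotone_Fn :: "'k set set \<Rightarrow> (('k \<rightharpoonup> 'k) \<Rightarrow> ('k \<rightharpoonup> 'k)) \<Rightarrow> bool" where
  "monotone_Fn I H \<longleftrightarrow> (\<forall>g\<in>Fn I. H g \<in> Fn I) \<and>
     (\<forall>g\<in>Fn I. \<forall>h\<in>Fn I. g \<subseteq>\<^sub>m h \<longrightarrow> H g \<subseteq>\<^sub>m H h)"

definition next_in :: "'k::wellorder set \<Rightarrow> 'k \<Rightarrow> 'k" where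
  "next_in A a = (LEAST c. c \<in> A \<and> a < c)"

definition A_recursive ::
  "'k::wellorder set set \<Rightarrow> 'k set \<Rightarrow> ('k \<Rightarrow> 'k set) \<Rightarrow> (('k \<Rightarrow> 'k) \<Rightarrow> ('k \<Rightarrow> 'k)) \<Rightarrow> bool" where
  "A_recursive I A B f \<longleftrightarrow>
     (\<exists>H. monotone_Fn I H \<and>
        (\<forall>a\<in>A. \<forall>x. \<forall>t \<in> B (next_in A a) \<union> (A \<inter> {..<next_in A a}).
            H (restr x (B a)) t = Some (f x t)))"

end

theory Submission
  imports Defs
begin

text \<open>On B(a') with a' = next_in A a, the value f x is H (x restricted to B a), so it
  depends only on x restricted to the small set B a. A basic open set N g of the target has
  dom g in I, so dom g lies in some B(a') with a in A; then f maps the basic neighbourhood of x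
  given by B a into N g.\<close>

lemma dom_restr [simp]: "dom (restr x D) = D"
  by (auto simp: restr_def)

lemma restr_apply: "t \<in> D \<Longrightarrow> restr x D t = Some (x t)"
  by (simp add: restr_def)

lemma restr_in_Fn: "D \<in> I \<Longrightarrow> restr x D \<in> Fn I"
  by (simp add: Fn_def)

lemma restr_eq_iff: "restr y D = restr x D \<longleftrightarrow> (\<forall>t\<in>D. y t = x t)"
  by (auto simp: restr_def restrict_map_def fun_eq_iff)

lemma Nbhd_restr: "Nbhd (restr x D) = {y. \<forall>t\<in>D. y t = x t}"
  by (auto simp: Nbhd_def ext_by_def restr_apply)

lemma topspace_tau: "{} \<in> I \<Longrightarrow> topspace (tau I) = UNIV"
  unfolding tau_def topology_generated_by_topspace
  by (force simp: Fn_def Nbhd_def ext_by_def)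

lemma openin_tau_Nbhd: "g \<in> Fn I \<Longrightarrow> openin (tau I) (Nbhd g)"
  unfolding tau_def by (rule topology_generated_by_Basis) blast

lemma continuous_map_tau_if_determined:
  assumes "{} \<in> I"
    and determined: "\<And>X. X \<in> I \<Longrightarrow>
      \<exists>D\<in>I. \<forall>x y. (\<forall>t\<in>D. y t = x t) \<longrightarrow> (\<forall>t\<in>X. f y t = f x t)"
  shows "continuous_map (tau I) (tau I) f"
  unfolding tau_def
proof (rule continuous_on_generated_topo)
  fix U assume "U \<in> Nbhd ` Fn I"
  then obtain g where g: "g \<in> Fn I" and U: "U = Nbhd g" by blast
  obtain D where "D \<in> I" and D: "\<And>x y. \<forall>t\<in>D. y t = x t \<Longrightarrow> \<forall>t\<in>dom g. f y t = f x t"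
    using determined g unfolding Fn_def by blast
  have "openin (tau I) (f -` U)"
  proof (subst openin_subopen, intro ballI)
    fix x assume x: "x \<in> f -` U"
    have "Nbhd (restr x D) \<subseteq> f -` U"
    proof
      fix y assume "y \<in> Nbhd (restr x D)"
      then have "\<forall>t\<in>dom g. f y t = f x t"
        using D by (simp add: Nbhd_restr)
      then show "y \<in> f -` U"
        using x by (simp add: U Nbhd_def ext_by_def)
    qed
    moreover have "openin (tau I) (Nbhd (restr x D))"
      using \<open>D \<in> I\<close> by (intro openin_tau_Nbhd restr_in_Fn)
    moreover have "x \<in> Nbhd (restr x D)"
      by (simp add: Nbhd_restr)
    ultimately show "\<exists>T. openin (tau I) T \<and> x \<in> T \<and> T \<subseteq> f -` U"
      by blast
  qed
  then show "openin (topology_generated_by (Nbhd ` Fn I))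
      (f -` U \<inter> topspace (topology_generated_by (Nbhd ` Fn I)))"
    using topspace_tau[OF \<open>{} \<in> I\<close>] by (simp add: tau_def)
next
  show "f ` topspace (topology_generated_by (Nbhd ` Fn I)) \<subseteq> \<Union> (Nbhd ` Fn I)"
    using topspace_tau[OF \<open>{} \<in> I\<close>] by (simp add: tau_def)
qed

lemma initial_wo_no_greatest:
  assumes "is_initial_wo TYPE('k::wellorder)" and "infinite (UNIV::'k set)"
  shows "\<exists>c. (a::'k) < c"
proof (rule ccontr)
  assume "\<nexists>c. a < c"
  then have UNIV_eq: "(UNIV::'k set) = insert a {..<a}"
    by (auto simp: not_less intro: le_neq_trans)
  then have "infinite {..<a}"
    using assms(2) by (metis finite_insert)
  then have "(UNIV::'k set) \<lesssim> {..<a}"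
    using UNIV_eq infinite_insert_eqpoll eqpoll_imp_lepoll by metis
  then show False
    using assms(1) unfolding is_initial_wo_def by blast
qed

lemma less_next_in:
  fixes A :: "'k::wellorder set"
  assumes "unbounded_set A" and "\<And>b::'k. \<exists>c. b < c"
  shows "a < next_in A a"
proof -
  obtain d where "a < d" using assms(2)[of a] by blast
  moreover obtain c where "c \<in> A" "d \<le> c"
    using assms(1) unfolding unbounded_set_def by blast
  ultimately have "c \<in> A \<and> a < c" by simp
  then show ?thesis
    unfolding next_in_def by (rule LeastI2_ex[OF exI]) simp
qed

lemma approximation_seq_covers_next_in:
  assumes "approximation_seq I B" and "unbounded_set A"
    and "\<And>a. a < next_in A a" and "X \<in> I"
  shows "\<exists>a\<in>A. X \<subseteq> B (next_in A a)"
proof -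
  have B_mono: "\<And>a b. a < b \<Longrightarrow> B a \<subset> B b" and B_cover: "\<exists>b. X \<subset> B b"
    using assms(1,4) by (simp_all add: approximation_seq_def)
  obtain b where "X \<subset> B b"
    using B_cover by blast
  moreover obtain a where "a \<in> A" and "b \<le> a"
    using assms(2) unfolding unbounded_set_def by blast
  moreover have "B b \<subset> B (next_in A a)"
    using B_mono le_less_trans[OF \<open>b \<le> a\<close> assms(3)] .
  ultimately show ?thesis
    by blast
qed

lemma A_recursive_determined:
  assumes "A_recursive I A B f" and "a \<in> A" and "\<forall>t\<in>B a. y t = x t"
    and "t \<in> B (next_in A a)"
  shows "f y t = f x t"
proof -
  obtain H where H: "\<And>z. H (restr z (B a)) t = Some (f z t)"
    using assms(1,2,4) unfolding A_recursive_def by blast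
  have "restr y (B a) = restr x (B a)"
    using assms(3) by (simp add: restr_eq_iff)
  then show ?thesis
    using H[of x] H[of y] by simp
qed

theorem fact6p2:
  fixes I :: "'k::wellorder set set"
    and B :: "'k \<Rightarrow> 'k set"
    and A :: "'k set"
    and f :: "('k \<Rightarrow> 'k) \<Rightarrow> ('k \<Rightarrow> 'k)"
  assumes "uncountable_regular_cardinal TYPE('k)"
    and "is_ideal I" and "kappa_complete I" and "proper_ideal I"
    and "\<forall>X. bounded_set X \<longrightarrow> X \<in> I"
    and "\<exists>\<B>. is_basis I \<B> \<and> \<B> \<approx> (UNIV::'k set)"
    and "approximation_seq I B"
    and "unbounded_set A"
    and "A_recursive I A B f"
  shows "continuous_map (tau I) (tau I) f"
proof (rule continuous_map_tau_if_determined)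
  show "{} \<in> I"
    using assms(2) by (simp add: is_ideal_def)
next
  fix X assume "X \<in> I"
  have no_greatest: "\<exists>c. b < c" for b :: 'k
    using assms(1) countable_finite
    by (intro initial_wo_no_greatest) (auto simp: uncountable_regular_cardinal_def)
  have "a < next_in A a" for a
    using assms(8) no_greatest by (rule less_next_in)
  then obtain a where "a \<in> A" and X: "X \<subseteq> B (next_in A a)"
    using approximation_seq_covers_next_in[OF assms(7,8) _ \<open>X \<in> I\<close>] by blast
  moreover have "B a \<in> I"
    using assms(7) by (simp add: approximation_seq_def)
  moreover have "\<forall>t\<in>X. f y t = f x t" if "\<forall>t\<in>B a. y t = x t" for x y
    using A_recursive_determined[OF assms(9) \<open>a \<in> A\<close> that] X by blast
  ultimately show "\<exists>D\<in>I. \<forall>x y. (\<forall>t\<in>D. y t = x t) \<longrightarrow> (\<forall>t\<in>X. f y t = f x t)"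
    by blast
qed

end
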